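(* For every $n\ge4$, the word formed by the first $F_n$ letters of $\mathcal S$ equals the word formed by the letters of $\mathcal S$ in positions $F_n+1,\dots,2F_n$.
   Context: Fibonacci numbers: $F_1=F_2=1$, $F_{n+1}=F_n+F_{n-1}$ for $n\ge2$. Golden string: define finite words over $\{A,B\}$ by $S_1=B$, $S_2=BA$, $S_n=S_{n-1}:S_{n-2}$ for $n\ge3$, where $:$ denotes concatenation; each $S_n$ is a prefix of $S_{n+1}$, and $\mathcal S$ is the infinite word having every $S_n$ as a prefix ($\mathcal S=BABBABABBABB\ldots$). Letters of $\mathcal S$ are indexed starting at $1$. *)

theory Defs
  imports "HOL-Number_Theory.Fib"
begin

datatype letter = A | B

text \<open>Finite golden words: S 1 = B, S 2 = BA, S n = S (n-1) @ S (n-2) for n >= 3.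
  S 0 is not used (set to the empty word).\<close>
fun S :: "nat \<Rightarrow> letter list" where
  "S 0 = []"
| "S (Suc 0) = [B]"
| "S (Suc (Suc 0)) = [B, A]"
| "S (Suc (Suc (Suc n))) = S (Suc (Suc n)) @ S (Suc n)"

text \<open>The infinite golden string, as the unique infinite word having every S n
  (n >= 1) as a prefix. Internally 0-based: golden_word i is the letter at
  position i+1 of the golden string.\<close>
definition golden_word :: "nat \<Rightarrow> letter" where
  "golden_word = (THE w. \<forall>n\<ge>1. \<forall>i<length (S n). w i = S n ! i)"

definition golden_letter :: "nat \<Rightarrow> letter" where
  "golden_letter k = golden_word (k - 1)"

end

theory Submission
  imports Defs "HOL-Library.Sublist"
begin

text \<open>Unfolding the recursion twice gives \<open>S (m+4) = S (m+2) @ S (m+1) @ S (m+1) @ S m\<close>,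
  and \<open>S (m+1) @ S m = S (m+2)\<close> is a prefix of \<open>S (m+1) @ S (m+1)\<close> because \<open>S m\<close> is a prefix
  of \<open>S (m+1)\<close>. Hence the golden string starts with the square \<open>S (m+2) @ S (m+2)\<close>,
  whose halves have length \<open>F (m+3)\<close>.\<close>

lemma length_S: "n \<ge> 1 \<Longrightarrow> length (S n) = fib (Suc n)"
proof (induction n rule: S.induct)
  case (4 n)
  then show ?case by (cases n) (auto simp: numeral_eq_Suc)
qed auto

lemma prefix_S_Suc: "n \<ge> 1 \<Longrightarrow> prefix (S n) (S (Suc n))"
  by (induction n rule: S.induct) auto

lemma prefix_S_mono:
  assumes "1 \<le> k" "k \<le> m"
  shows "prefix (S k) (S m)"
  using assms(2)
proof (induction m rule: dec_induct)
  case (step m)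
  then show ?case using prefix_S_Suc[of m] assms(1) prefix_order.trans by auto
qed simp

lemma nth_S_mono:
  assumes "1 \<le> k" "k \<le> m" "i < length (S k)"
  shows "S m ! i = S k ! i"
proof -
  obtain zs where "S m = S k @ zs" using prefix_S_mono[OF assms(1,2)] by (auto simp: prefix_def)
  then show ?thesis using assms(3) by (simp add: nth_append)
qed

lemma less_fib_Suc_Suc: "i < fib (Suc (Suc i))"
proof (induction i)
  case (Suc i)
  then show ?case using fib_neq_0_nat[of "Suc i"] by simp
qed simp

lemma less_length_S_Suc: "i < length (S (Suc i))"
  using length_S[of "Suc i"] less_fib_Suc_Suc[of i] by simp

lemma golden_word_eq_nth_S:
  assumes "1 \<le> n" "i < length (S n)"
  shows "golden_word i = S n ! i"
proof -
  let ?w = "\<lambda>i. S (Suc i) ! i"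
  have consistent: "\<forall>n\<ge>1. \<forall>i<length (S n). ?w i = S n ! i"
  proof (intro allI impI)
    fix n i assume n: "n \<ge> 1" and i: "i < length (S n)"
    show "?w i = S n ! i"
    proof (cases "Suc i \<le> n")
      case True
      then show ?thesis using nth_S_mono[of "Suc i" n i] less_length_S_Suc[of i] by simp
    next
      case False
      then show ?thesis using nth_S_mono[of n "Suc i" i] n i by simp
    qed
  qed
  have unique: "w = ?w" if "\<forall>n\<ge>1. \<forall>i<length (S n). w i = S n ! i" for w
  proof
    fix i
    show "w i = ?w i" using that less_length_S_Suc[of i] by simp
  qed
  have golden_word: "golden_word = ?w"
    unfolding golden_word_def using consistent unique by (rule the_equality)
  show ?thesis unfolding golden_word using consistent assms by simp
qed

lemma map_golden_letter_upt:
  assumes "1 \<le> m" "a \<le> b" "b \<le> length (S m)"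
  shows "map golden_letter [Suc a..<Suc b] = drop a (take b (S m))"
proof (rule nth_equalityI)
  show "length (map golden_letter [Suc a..<Suc b]) = length (drop a (take b (S m)))"
    using assms by (simp del: upt_Suc)
next
  fix i assume "i < length (map golden_letter [Suc a..<Suc b])"
  then show "map golden_letter [Suc a..<Suc b] ! i = drop a (take b (S m)) ! i"
    using assms golden_word_eq_nth_S[OF assms(1)] by (simp del: upt_Suc add: golden_letter_def)
qed

lemma prefix_square_S: "m \<ge> 1 \<Longrightarrow> prefix (S (m + 2) @ S (m + 2)) (S (m + 4))"
proof -
  assume "m \<ge> 1"
  then obtain j where m: "m = Suc j" by (cases m) auto
  have "prefix (S m) (S (Suc m))" using \<open>m \<ge> 1\<close> by (rule prefix_S_Suc)
  then have "prefix (S (Suc m) @ S m) (S (Suc m) @ S (Suc m) @ S m)"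
    by simp
  then show ?thesis using m by (simp add: numeral_eq_Suc)
qed

theorem proposition2p1:
  fixes n :: nat
  assumes "n \<ge> 4"
  shows "map golden_letter [1..<fib n + 1] = map golden_letter [fib n + 1..<2 * fib n + 1]"
proof -
  define m where "m = n - 3"
  have n: "n = m + 3" and "m \<ge> 1" using assms by (simp_all add: m_def)
  have len: "length (S (m + 2)) = fib n" using length_S[of "m + 2"] n by (simp del: fib.simps add: eval_nat_numeral)
  have square: "take (2 * fib n) (S (m + 4)) = S (m + 2) @ S (m + 2)"
    using prefix_square_S[OF \<open>m \<ge> 1\<close>] len by (auto simp: prefix_def mult_2)
  have halves: "take (fib n) (S (m + 2) @ S (m + 2)) = S (m + 2)"
    "drop (fib n) (S (m + 2) @ S (m + 2)) = S (m + 2)"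
    unfolding len[symmetric] by simp_all
  have "2 * fib n \<le> length (S (m + 4))"
    using prefix_length_le[OF prefix_square_S[OF \<open>m \<ge> 1\<close>]] len by simp
  then have "map golden_letter [1..<fib n + 1] = take (fib n) (take (2 * fib n) (S (m + 4)))"
    and "map golden_letter [fib n + 1..<2 * fib n + 1] = drop (fib n) (take (2 * fib n) (S (m + 4)))"
    using map_golden_letter_upt[of "m + 4" 0 "fib n"]
      map_golden_letter_upt[of "m + 4" "fib n" "2 * fib n"] \<open>m \<ge> 1\<close>
    by (simp_all del: upt_Suc)
  then show ?thesis by (simp only: square halves)
qed

end
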